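(* Let $012345$ be a convex hexagon with area $A$. Suppose that all six vertex triangles (the triangles with vertices $i-1,i,i+1$, indices mod $6$) have the same area $k$, and that the triangle $013$ has area $\lambda k$. Then $$(\lambda-1)A^2-(\lambda^2+4\lambda-4)kA+2(\lambda^2+2\lambda-2)k^2=0,$$ or equivalently $$A=\frac{\lambda^2+2\lambda-2}{\lambda-1}\,k.$$
   Context: The vertices of the hexagon are labelled $0,\dots,5$ in cyclic order. *)

theory Defs
  imports Main "HOL.Real"
begin

type_synonym point = "real \<times> real"

text \<open>Cross product of vectors b - a and c - a (twice the signed area of triangle abc).\<close>
definition cross3 :: "point \<Rightarrow> point \<Rightarrow> point \<Rightarrow> real" where
  "cross3 a b c = (fst b - fst a) * (snd c - snd a) - (snd b - snd a) * (fst c - fst a)"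

definition tri_area :: "point \<Rightarrow> point \<Rightarrow> point \<Rightarrow> real" where
  "tri_area a b c = \<bar>cross3 a b c\<bar> / 2"

definition hv :: "(nat \<Rightarrow> point) \<Rightarrow> nat \<Rightarrow> point" where
  "hv P i = P (i mod 6)"

text \<open>Strictly convex hexagon with vertices P 0, ..., P 5 in cyclic order
  (either orientation): for every edge, all other vertices lie strictly on the
  same side of the line through that edge.\<close>
definition convex_hexagon :: "(nat \<Rightarrow> point) \<Rightarrow> bool" where
  "convex_hexagon P \<longleftrightarrow> (\<exists>s::real. (s = 1 \<or> s = -1) \<and>
     (\<forall>i<6. \<forall>j<6. j \<noteq> i \<and> j \<noteq> (i + 1) mod 6 \<longrightarrow>
        s * cross3 (hv P i) (hv P (i + 1)) (hv P j) > 0))"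

text \<open>Area of the polygon P 0 ... P 5 (shoelace formula).\<close>
definition hex_area :: "(nat \<Rightarrow> point) \<Rightarrow> real" where
  "hex_area P = \<bar>\<Sum>i<6. fst (hv P i) * snd (hv P (i + 1)) - fst (hv P (i + 1)) * snd (hv P i)\<bar> / 2"

end

theory Submission
  imports Defs
begin

text \<open>The hypotheses only involve signed areas, which an affine map multiplies by its
  determinant, so we may take \<open>P 0 = (0,0)\<close>, \<open>P 1 = (1,0)\<close>, \<open>P 5 = (0,1)\<close> and all vertex
  triangles of doubled signed area 1. The remaining vertex conditions then force the hexagon
  \<open>(0,0), (1,0), (a+1,1), (a u,u), (1,u), (0,1)\<close> with \<open>a (u - 1) = 1\<close>; here \<open>u\<close> is the doubled
  area of triangle 013 and \<open>2 + a u\<^sup>2\<close> that of the hexagon, and eliminating \<open>a\<close> yields the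
  relation. Convexity fixes a common sign of all these signed areas and excludes the degenerate
  configurations \<open>a = -1\<close>, \<open>u = 0\<close>.\<close>

lemma cross3_rotate: "cross3 a b c = cross3 b c a"
  by (simp add: cross3_def algebra_simps)

definition affine_frame :: "point \<Rightarrow> point \<Rightarrow> point \<Rightarrow> point \<Rightarrow> point" where
  "affine_frame Z X Y z =
     (fst Z + fst z * (fst X - fst Z) + snd z * (fst Y - fst Z),
      snd Z + fst z * (snd X - snd Z) + snd z * (snd Y - snd Z))"

definition frame_coords :: "point \<Rightarrow> point \<Rightarrow> point \<Rightarrow> point \<Rightarrow> point" where
  "frame_coords Z X Y Q = (cross3 Z Q Y / cross3 Z X Y, cross3 Z X Q / cross3 Z X Y)"

lemma cross3_affine_frame:
  "cross3 (affine_frame Z X Y a) (affine_frame Z X Y b) (affine_frame Z X Y c)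
     = cross3 Z X Y * cross3 a b c"
  by (simp add: affine_frame_def cross3_def algebra_simps)

lemma affine_frame_coords:
  assumes "cross3 Z X Y \<noteq> 0"
  shows "affine_frame Z X Y (frame_coords Z X Y Q) = Q"
proof -
  have "cross3 Z Q Y * (fst X - fst Z) + cross3 Z X Q * (fst Y - fst Z)
      = cross3 Z X Y * (fst Q - fst Z)"
    "cross3 Z Q Y * (snd X - snd Z) + cross3 Z X Q * (snd Y - snd Z)
      = cross3 Z X Y * (snd Q - snd Z)"
    by (simp_all add: cross3_def algebra_simps)
  with assms show ?thesis
    by (simp add: affine_frame_def frame_coords_def prod_eq_iff divide_simps)
      (simp add: algebra_simps)
qed

lemma frame_coords_frame_points:
  assumes "cross3 Z X Y \<noteq> 0"
  shows "frame_coords Z X Y Z = (0, 0)" "frame_coords Z X Y X = (1, 0)"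
    "frame_coords Z X Y Y = (0, 1)"
  using assms by (simp_all add: frame_coords_def cross3_def)

definition hex_signed_area2 :: "(nat \<Rightarrow> point) \<Rightarrow> real" where
  "hex_signed_area2 Q = cross3 (Q 0) (Q 1) (Q 2) + cross3 (Q 0) (Q 2) (Q 3)
     + cross3 (Q 0) (Q 3) (Q 4) + cross3 (Q 0) (Q 4) (Q 5)"

lemma hex_area_eq_signed: "hex_area P = \<bar>hex_signed_area2 P\<bar> / 2"
proof -
  have six: "(\<Sum>i<6. f i) = f 0 + f 1 + f 2 + f 3 + f 4 + f 5" for f :: "nat \<Rightarrow> real"
    by (simp add: eval_nat_numeral)
  have "hex_signed_area2 P
      = (\<Sum>i<6. fst (hv P i) * snd (hv P (i + 1)) - fst (hv P (i + 1)) * snd (hv P i))"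
    unfolding six
    \<comment> \<open>without the deletions \<open>1 + 1\<close> becomes \<open>Suc (Suc 0)\<close> instead of the numeral \<open>2\<close>\<close>
    by (simp add: hv_def hex_signed_area2_def cross3_def algebra_simps
        del: One_nat_def plus_1_eq_Suc)
  then show ?thesis by (simp add: hex_area_def)
qed

lemma hex_signed_area2_affine_frame:
  "hex_signed_area2 (affine_frame Z X Y \<circ> q) = cross3 Z X Y * hex_signed_area2 q"
  by (simp add: hex_signed_area2_def cross3_affine_frame algebra_simps)

lemma normalized_hexagon_identity:
  fixes q :: "nat \<Rightarrow> point"
  assumes frame: "q 0 = (0, 0)" "q 1 = (1, 0)" "q 5 = (0, 1)"
    and vertex: "cross3 (q 0) (q 1) (q 2) = 1" "cross3 (q 1) (q 2) (q 3) = 1"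
      "cross3 (q 2) (q 3) (q 4) = 1" "cross3 (q 3) (q 4) (q 5) = 1" "cross3 (q 4) (q 5) (q 0) = 1"
    and nondegenerate: "cross3 (q 5) (q 0) (q 2) \<noteq> 0" "cross3 (q 0) (q 1) (q 3) \<noteq> 0"
  defines "x \<equiv> cross3 (q 0) (q 1) (q 3)"
  shows "(x - 1) * hex_signed_area2 q = x\<^sup>2 + 2 * x - 2"
proof -
  obtain p b where q2: "q 2 = (p, b)" by fastforce
  obtain r u where q3: "q 3 = (r, u)" by fastforce
  obtain v w where q4: "q 4 = (v, w)" by fastforce
  note coords = frame q2 q3 q4
  define a where "a = p - 1"
  have b: "b = 1" using vertex(1) unfolding coords by (simp add: cross3_def)
  have v: "v = 1" using vertex(5) unfolding coords by (simp add: cross3_def algebra_simps)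
  have "p \<noteq> 0" "u \<noteq> 0" using nondegenerate unfolding coords by (simp_all add: cross3_def)
  have r: "r = a * u"
    using vertex(2) b unfolding coords by (simp add: cross3_def a_def algebra_simps)
  have "u * (a * w - a - 1) = 0"
    using vertex(4) r v unfolding coords by (simp add: cross3_def algebra_simps)
  with \<open>u \<noteq> 0\<close> have aw: "a * w = a + 1" by simp
  have "(a * u - a - 1) * w = 0"
    using vertex(3) r b v unfolding coords by (simp add: cross3_def a_def algebra_simps)
  moreover have "w \<noteq> 0" using aw \<open>p \<noteq> 0\<close> by (auto simp: a_def)
  ultimately have au: "a * u = a + 1" by simp
  have x: "x = u" unfolding x_def coords by (simp add: cross3_def)
  have area: "hex_signed_area2 q = 2 + a * u\<^sup>2"
  proof -
    have "a \<noteq> 0" using au by auto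
    with au aw have "w = u" by (metis mult_left_cancel)
    moreover have "p = a + 1" by (simp add: a_def)
    ultimately show ?thesis unfolding hex_signed_area2_def coords r b v
      by (simp add: cross3_def algebra_simps power2_eq_square)
  qed
  have "(u - 1) * (2 + a * u\<^sup>2) = 2 * u - 2 + u\<^sup>2 * (a * u - a)"
    by (simp add: algebra_simps power2_eq_square)
  also have "\<dots> = u\<^sup>2 + 2 * u - 2" using au by simp
  finally show ?thesis by (simp add: x area)
qed

lemma equal_vertex_triangles_identity:
  fixes Q :: "nat \<Rightarrow> point" and c :: real
  assumes "c \<noteq> 0"
    and vertex: "cross3 (Q 5) (Q 0) (Q 1) = c" "cross3 (Q 0) (Q 1) (Q 2) = c"
      "cross3 (Q 1) (Q 2) (Q 3) = c" "cross3 (Q 2) (Q 3) (Q 4) = c"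
      "cross3 (Q 3) (Q 4) (Q 5) = c" "cross3 (Q 4) (Q 5) (Q 0) = c"
    and nondegenerate: "cross3 (Q 5) (Q 0) (Q 2) \<noteq> 0" "cross3 (Q 0) (Q 1) (Q 3) \<noteq> 0"
  defines "x \<equiv> cross3 (Q 0) (Q 1) (Q 3)"
  shows "(x - c) * hex_signed_area2 Q = x\<^sup>2 + 2 * c * x - 2 * c\<^sup>2"
proof -
  define q where "q i = frame_coords (Q 0) (Q 1) (Q 5) (Q i)" for i
  have det: "cross3 (Q 0) (Q 1) (Q 5) = c" using vertex(1) cross3_rotate by metis
  have Q: "Q = affine_frame (Q 0) (Q 1) (Q 5) \<circ> q"
    using det \<open>c \<noteq> 0\<close> by (simp add: fun_eq_iff q_def affine_frame_coords)
  have scaled: "cross3 (Q i) (Q j) (Q l) = c * cross3 (q i) (q j) (q l)" for i j l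
    by (subst (1 2 3) Q) (simp only: comp_apply cross3_affine_frame det)
  have area: "hex_signed_area2 Q = c * hex_signed_area2 q"
    by (subst Q) (simp only: hex_signed_area2_affine_frame det)
  have "(cross3 (q 0) (q 1) (q 3) - 1) * hex_signed_area2 q
      = (cross3 (q 0) (q 1) (q 3))\<^sup>2 + 2 * cross3 (q 0) (q 1) (q 3) - 2"
  proof (rule normalized_hexagon_identity)
    show "q 0 = (0, 0)" "q 1 = (1, 0)" "q 5 = (0, 1)"
      using frame_coords_frame_points det \<open>c \<noteq> 0\<close> by (simp_all add: q_def)
  qed (use vertex nondegenerate \<open>c \<noteq> 0\<close> in \<open>simp_all add: scaled\<close>)
  then have "c\<^sup>2 * ((cross3 (q 0) (q 1) (q 3) - 1) * hex_signed_area2 q)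
      = c\<^sup>2 * ((cross3 (q 0) (q 1) (q 3))\<^sup>2 + 2 * cross3 (q 0) (q 1) (q 3) - 2)"
    by simp
  then show ?thesis
    by (simp add: x_def area scaled algebra_simps power2_eq_square)
qed

lemma convex_hexagon_orientation:
  assumes "convex_hexagon P"
  obtains s :: real where "s = 1 \<or> s = -1"
    and "\<And>i. i < 6 \<Longrightarrow> 0 < s * cross3 (hv P (i + 5)) (hv P i) (hv P (i + 1))"
    and "0 < s * cross3 (P 5) (P 0) (P 2)" and "0 < s * cross3 (P 0) (P 1) (P 3)"
    and "0 < s * hex_signed_area2 P"
proof -
  obtain s :: real where s: "s = 1 \<or> s = -1" and edge:
    "\<And>i j. i < 6 \<Longrightarrow> j < 6 \<Longrightarrow> j \<noteq> i \<Longrightarrow> j \<noteq> (i + 1) mod 6 \<Longrightarrow>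
       0 < s * cross3 (hv P i) (hv P (i + 1)) (hv P j)"
    using assms unfolding convex_hexagon_def by blast
  have vertex: "0 < s * cross3 (hv P (i + 5)) (hv P i) (hv P (i + 1))" if "i < 6" for i
  proof -
    have "i = 0 \<or> i = 1 \<or> i = 2 \<or> i = 3 \<or> i = 4 \<or> i = 5" using that by auto
    then show ?thesis using edge[of "(i + 5) mod 6" "(i + 1) mod 6"]
      by (elim disjE) (simp_all add: hv_def del: One_nat_def plus_1_eq_Suc)
  qed
  have "0 < s * cross3 (P 5) (P 0) (P 2)" "0 < s * cross3 (P 0) (P 1) (P 3)"
    using edge[of 5 2] edge[of 0 3] by (simp_all add: hv_def)
  moreover have "0 < s * hex_signed_area2 P"
  proof -
    have "0 < s * cross3 (P 0) (P 1) (P 2)" "0 < s * cross3 (P 2) (P 3) (P 0)"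
      "0 < s * cross3 (P 3) (P 4) (P 0)" "0 < s * cross3 (P 4) (P 5) (P 0)"
      using edge[of 0 2] edge[of 2 0] edge[of 3 0] edge[of 4 0] by (simp_all add: hv_def)
    then show ?thesis
      unfolding hex_signed_area2_def by (simp add: cross3_rotate[of "P 0"] distrib_left)
  qed
  ultimately show ?thesis using that s vertex by blast
qed

lemma convex_hexagon_area_relation:
  fixes P :: "nat \<Rightarrow> point"
  assumes "convex_hexagon P"
    and "hex_area P = A"
    and "\<forall>i<6. tri_area (hv P (i + 5)) (hv P i) (hv P (i + 1)) = k"
    and "tri_area (hv P 0) (hv P 1) (hv P 3) = lam * k"
  shows "0 < k" and "(lam - 1) * A = (lam\<^sup>2 + 2 * lam - 2) * k"
proof -
  obtain s :: real where s: "s = 1 \<or> s = -1"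
    and vertex_pos: "\<And>i. i < 6 \<Longrightarrow> 0 < s * cross3 (hv P (i + 5)) (hv P i) (hv P (i + 1))"
    and pos502: "0 < s * cross3 (P 5) (P 0) (P 2)"
    and pos013: "0 < s * cross3 (P 0) (P 1) (P 3)"
    and area_pos: "0 < s * hex_signed_area2 P"
    using convex_hexagon_orientation[OF assms(1)] by blast
  have signed: "X = 2 * t * s" if "0 < s * X" and "\<bar>X\<bar> / 2 = t" for X t
    using s that by auto
  have vertex: "cross3 (hv P (i + 5)) (hv P i) (hv P (i + 1)) = 2 * k * s" if "i < 6" for i
    using signed vertex_pos assms(3) that by (simp add: tri_area_def)
  have "s * s = 1" using s by auto
  then show "0 < k" using vertex_pos[of 0] vertex[of 0] by simp
  have "cross3 (P 5) (P 0) (P 1) = 2 * k * s" "cross3 (P 0) (P 1) (P 2) = 2 * k * s"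
    "cross3 (P 1) (P 2) (P 3) = 2 * k * s" "cross3 (P 2) (P 3) (P 4) = 2 * k * s"
    "cross3 (P 3) (P 4) (P 5) = 2 * k * s" "cross3 (P 4) (P 5) (P 0) = 2 * k * s"
    using vertex[of 0] vertex[of 1] vertex[of 2] vertex[of 3] vertex[of 4] vertex[of 5]
    by (simp_all add: hv_def del: One_nat_def plus_1_eq_Suc)
  moreover have "2 * k * s \<noteq> 0"
    and "cross3 (P 5) (P 0) (P 2) \<noteq> 0" "cross3 (P 0) (P 1) (P 3) \<noteq> 0"
    using pos502 pos013 \<open>0 < k\<close> s by auto
  ultimately have identity: "(cross3 (P 0) (P 1) (P 3) - 2 * k * s) * hex_signed_area2 P
      = (cross3 (P 0) (P 1) (P 3))\<^sup>2 + 2 * (2 * k * s) * cross3 (P 0) (P 1) (P 3)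
        - 2 * (2 * k * s)\<^sup>2"
    by (intro equal_vertex_triangles_identity)
  have "cross3 (P 0) (P 1) (P 3) = 2 * (lam * k) * s"
    using signed pos013 assms(4) by (simp add: tri_area_def hv_def)
  moreover have "hex_signed_area2 P = 2 * A * s"
    using signed area_pos assms(2) by (simp add: hex_area_eq_signed)
  ultimately have "(2 * (lam * k) * s - 2 * k * s) * (2 * A * s)
      = (2 * (lam * k) * s)\<^sup>2 + 2 * (2 * k * s) * (2 * (lam * k) * s)
        - 2 * (2 * k * s)\<^sup>2"
    using identity by simp
  then have "4 * k * (s * s) * ((lam - 1) * A)
      = 4 * k * (s * s) * ((lam\<^sup>2 + 2 * lam - 2) * k)"
    by (simp add: algebra_simps power2_eq_square)
  with \<open>s * s = 1\<close> \<open>0 < k\<close> show "(lam - 1) * A = (lam\<^sup>2 + 2 * lam - 2) * k" by simp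
qed

theorem corollary4:
  fixes P :: "nat \<Rightarrow> real \<times> real" and A k lam :: real
  assumes "convex_hexagon P"
    and "hex_area P = A"
    and "\<forall>i<6. tri_area (hv P (i + 5)) (hv P i) (hv P (i + 1)) = k"
    and "tri_area (hv P 0) (hv P 1) (hv P 3) = lam * k"
  shows "(lam - 1) * A\<^sup>2 - (lam\<^sup>2 + 4 * lam - 4) * k * A + 2 * (lam\<^sup>2 + 2 * lam - 2) * k\<^sup>2 = 0
       \<and> A = (lam\<^sup>2 + 2 * lam - 2) / (lam - 1) * k"
proof -
  have "0 < k" and linear: "(lam - 1) * A = (lam\<^sup>2 + 2 * lam - 2) * k"
    using convex_hexagon_area_relation[OF assms] by auto
  have "lam \<noteq> 1"
  proof
    assume "lam = 1"
    with linear \<open>0 < k\<close> show False by simp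
  qed
  have "(lam - 1) * A\<^sup>2 - (lam\<^sup>2 + 4 * lam - 4) * k * A + 2 * (lam\<^sup>2 + 2 * lam - 2) * k\<^sup>2
      = (A - 2 * k) * ((lam - 1) * A - (lam\<^sup>2 + 2 * lam - 2) * k)"
    by (simp add: algebra_simps power2_eq_square)
  with linear \<open>lam \<noteq> 1\<close> show ?thesis by (simp add: field_simps)
qed

end
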